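(* Let $\mathbf{A} \in \mathbb{R}^{L \times N}$, $\mathbf{L}_2 \in \mathbb{R}^{M_2 \times N}$ and $\lambda_2 > 0$. Assume: (i) $\mathbf{A}$ has full row rank, so that $\mathbf{A}\mathbf{A}^T$ is invertible; (ii) $\ker \mathbf{A} \cap \ker \mathbf{L}_2 = \{\mathbf{0}\}$; (iii) $\ker(\mathbf{A})^\perp$ is an invariant subspace of $\mathbf{L}_2^T\mathbf{L}_2$, i.e. $\mathbf{x} \in \ker(\mathbf{A})^\perp \Rightarrow \mathbf{L}_2^T\mathbf{L}_2\mathbf{x} \in \ker(\mathbf{A})^\perp$. Let $\mathbf{\Lambda}_2 = (\mathbf{A}\mathbf{A}^T)^{-1}\mathbf{A}\mathbf{L}_2^T\mathbf{L}_2\mathbf{A}^T$. Then $$(\mathbf{A}^T\mathbf{A} + \lambda_2\mathbf{L}_2^T\mathbf{L}_2)^{-1}\mathbf{A}^T = \mathbf{A}^T(\mathbf{A}\mathbf{A}^T + \lambda_2\mathbf{\Lambda}_2)^{-1},$$ where both inverses appearing in this identity exist.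
   Context: $\ker(\mathbf{A})^\perp$ denotes the orthogonal complement of the nullspace of $\mathbf{A}$ in $\mathbb{R}^N$. *)

theory Defs
  imports "HOL-Analysis.Analysis"
begin

end

theory Submission
  imports Defs
begin

(* Write K = ker A, P = L2^T L2, M = A^T A + lam2 P and N = A A^T + lam2 Lam2.
   Since K^perp is the row space of A, the matrix A^T (A A^T)^-1 A is the identity on K^perp;
   as P maps K^perp, which contains the range of A^T, into itself, this gives A^T Lam2 = P A^T and
   hence M A^T = A^T N. M is positive definite by the kernel condition and A^T is injective
   by the rank condition, so N is invertible too, and multiplying M A^T = A^T N by M^-1 on
   the left and N^-1 on the right yields the identity. *)

lemma matrix_inv_inverse:
  fixes A :: "'a::semiring_1^'n^'m"
  assumes "invertible A"
  shows "A ** matrix_inv A = mat 1" "matrix_inv A ** A = mat 1"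
proof -
  have "\<exists>A'. A ** A' = mat 1 \<and> A' ** A = mat 1"
    using assms unfolding invertible_def by blast
  then have "A ** matrix_inv A = mat 1 \<and> matrix_inv A ** A = mat 1"
    unfolding matrix_inv_def by (rule someI_ex)
  then show "A ** matrix_inv A = mat 1" "matrix_inv A ** A = mat 1" by auto
qed

lemma matrix_add_rdistrib:
  fixes A B :: "'a::comm_semiring_1^'n^'m" and C :: "'a^'p^'n"
  shows "(A + B) ** C = A ** C + B ** C"
  by (simp add: matrix_eq matrix_vector_mul_assoc[symmetric] matrix_vector_mult_add_rdistrib)

lemma invertible_iff_ker_trivial:
  fixes A :: "'a::field^'n^'n"
  shows "invertible A \<longleftrightarrow> (\<forall>x. A *v x = 0 \<longrightarrow> x = 0)"
  using invertible_left_inverse matrix_left_invertible_ker by blast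

lemma inner_transpose_mult:
  fixes A :: "real^'n^'m"
  shows "inner (transpose A *v y) x = inner y (A *v x)"
  by (simp add: dot_lmul_matrix)

lemma transpose_ker_trivial_if_full_row_rank:
  fixes A :: "real^'n^'m"
  assumes "rank A = CARD('m)" and "transpose A *v y = 0"
  shows "y = 0"
  using assms matrix_nonfull_linear_equations_eq[of "transpose A"] rank_transpose by metis

lemma invertible_gram_if_full_row_rank:
  fixes A :: "real^'n^'m"
  assumes "rank A = CARD('m)"
  shows "invertible (A ** transpose A)"
  unfolding invertible_iff_ker_trivial
proof (intro allI impI)
  fix y assume "(A ** transpose A) *v y = 0"
  then have "inner (transpose A *v y) (transpose A *v y) = 0"
    by (simp only: inner_transpose_mult matrix_vector_mul_assoc inner_zero_right)
  then show "y = 0"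
    using assms transpose_ker_trivial_if_full_row_rank by (metis inner_eq_zero_iff)
qed

lemma invertible_regularized_normal_matrix:
  fixes A :: "real^'n^'l" and L :: "real^'n^'m" and lam :: real
  assumes "lam > 0" and "{x. A *v x = 0} \<inter> {x. L *v x = 0} = {0}"
  shows "invertible (transpose A ** A + lam *\<^sub>R (transpose L ** L))"
    (is "invertible ?M")
  unfolding invertible_iff_ker_trivial
proof (intro allI impI)
  fix x assume "?M *v x = 0"
  moreover have "inner x (?M *v x) = inner (A *v x) (A *v x) + lam * inner (L *v x) (L *v x)"
    by (simp add: matrix_vector_mult_add_rdistrib inner_add_right inner_commute[of x]
        scaleR_matrix_vector_assoc[symmetric] matrix_vector_mul_assoc[symmetric] dot_lmul_matrix)
  ultimately have "inner (A *v x) (A *v x) + lam * inner (L *v x) (L *v x) = 0"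
    by simp
  moreover have "lam * inner (L *v x) (L *v x) \<ge> 0"
    using \<open>lam > 0\<close> by simp
  ultimately have "inner (A *v x) (A *v x) = 0" "inner (L *v x) (L *v x) = 0"
    using \<open>lam > 0\<close> by (simp_all add: add_nonneg_eq_0_iff)
  then have "A *v x = 0" "L *v x = 0" by simp_all
  then show "x = 0" using assms(2) by blast
qed

lemma transpose_mult_in_orthogonal_comp_ker:
  fixes A :: "real^'n^'m"
  shows "transpose A *v y \<in> orthogonal_comp {x. A *v x = 0}"
  unfolding orthogonal_comp_def orthogonal_def
  by (auto simp: inner_commute[of _ "y v* A"] dot_lmul_matrix)

lemma row_space_projection_fixes_orthogonal_comp_ker:
  fixes A :: "real^'n^'m"
  assumes "rank A = CARD('m)" and z: "z \<in> orthogonal_comp {x. A *v x = 0}"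
  shows "transpose A *v (matrix_inv (A ** transpose A) *v (A *v z)) = z"
proof -
  define w where "w = z - transpose A *v (matrix_inv (A ** transpose A) *v (A *v z))"
  have "A *v w = A *v z - (A ** transpose A ** matrix_inv (A ** transpose A)) *v (A *v z)"
    unfolding w_def
    by (simp add: matrix_vector_mult_diff_distrib matrix_vector_mul_assoc matrix_mul_assoc
        del: transpose_matrix_vector)
  also have "\<dots> = 0"
    using matrix_inv_inverse(1)[OF invertible_gram_if_full_row_rank[OF assms(1)]] by simp
  finally have "w \<in> {x. A *v x = 0}" by simp
  moreover have "w \<in> orthogonal_comp {x. A *v x = 0}"
    unfolding w_def
    using z transpose_mult_in_orthogonal_comp_ker subspace_orthogonal_comp subspace_diff by blast
  ultimately have "inner w w = 0"
    unfolding orthogonal_comp_def orthogonal_def by blast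
  then show ?thesis unfolding w_def by simp
qed

lemma transpose_mult_compression_eq:
  fixes A :: "real^'n^'m" and P :: "real^'n^'n"
  assumes "rank A = CARD('m)"
    and "\<And>x. x \<in> orthogonal_comp {x. A *v x = 0} \<Longrightarrow>
        P *v x \<in> orthogonal_comp {x. A *v x = 0}"
  shows "transpose A ** (matrix_inv (A ** transpose A) ** A ** P ** transpose A)
    = P ** transpose A"
proof (subst matrix_eq, intro allI)
  fix y
  have "P *v (transpose A *v y) \<in> orthogonal_comp {x. A *v x = 0}"
    using assms(2) transpose_mult_in_orthogonal_comp_ker by blast
  from row_space_projection_fixes_orthogonal_comp_ker[OF assms(1) this]
  show "(transpose A ** (matrix_inv (A ** transpose A) ** A ** P ** transpose A)) *v y
      = (P ** transpose A) *v y"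
    by (simp add: matrix_vector_mul_assoc[symmetric] matrix_mul_assoc del: transpose_matrix_vector)
qed

lemma invertible_if_intertwined:
  fixes M :: "'a::field^'n^'n" and N :: "'a^'l^'l" and B :: "'a^'l^'n"
  assumes "invertible M" and "M ** B = B ** N" and "\<And>y. B *v y = 0 \<Longrightarrow> y = 0"
  shows "invertible N"
  unfolding invertible_iff_ker_trivial
proof (intro allI impI)
  fix y assume "N *v y = 0"
  then have "M *v (B *v y) = 0"
    by (metis assms(2) matrix_vector_mul_assoc matrix_vector_mult_0_right)
  then have "B *v y = 0"
    using assms(1) invertible_iff_ker_trivial by blast
  then show "y = 0" using assms(3) by blast
qed

lemma matrix_inv_intertwined:
  fixes M :: "'a::field^'n^'n" and N :: "'a^'l^'l" and B :: "'a^'l^'n"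
  assumes "invertible M" and "M ** B = B ** N" and "\<And>y. B *v y = 0 \<Longrightarrow> y = 0"
  shows "matrix_inv M ** B = B ** matrix_inv N"
proof -
  note N_inv = matrix_inv_inverse[OF invertible_if_intertwined[OF assms]]
  note M_inv = matrix_inv_inverse[OF assms(1)]
  have "matrix_inv M ** B = matrix_inv M ** B ** (N ** matrix_inv N)"
    by (simp add: N_inv)
  also have "\<dots> = matrix_inv M ** (M ** B) ** matrix_inv N"
    by (simp add: assms(2) matrix_mul_assoc)
  also have "\<dots> = B ** matrix_inv N"
    by (simp add: M_inv matrix_mul_assoc)
  finally show ?thesis .
qed

theorem lemma1:
  fixes A :: "real^'n^'l" and L2 :: "real^'n^'m" and lam2 :: real
  assumes lam_pos: "lam2 > 0"
    and full_row_rank: "rank A = CARD('l)"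
    and ker_int: "{x. A *v x = 0} \<inter> {x. L2 *v x = 0} = {0}"
    and invariant: "\<And>x. x \<in> orthogonal_comp {x. A *v x = 0} \<Longrightarrow>
        (transpose L2 ** L2) *v x \<in> orthogonal_comp {x. A *v x = 0}"
  shows "let Lam2 = matrix_inv (A ** transpose A) ** A ** transpose L2 ** L2 ** transpose A
         in invertible (transpose A ** A + lam2 *\<^sub>R (transpose L2 ** L2))
          \<and> invertible (A ** transpose A + lam2 *\<^sub>R Lam2)
          \<and> matrix_inv (transpose A ** A + lam2 *\<^sub>R (transpose L2 ** L2)) ** transpose A
              = transpose A ** matrix_inv (A ** transpose A + lam2 *\<^sub>R Lam2)"
proof -
  define Lam2 where "Lam2 = matrix_inv (A ** transpose A) ** A ** (transpose L2 ** L2) ** transpose A"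
  define M where "M = transpose A ** A + lam2 *\<^sub>R (transpose L2 ** L2)"
  define N where "N = A ** transpose A + lam2 *\<^sub>R Lam2"
  have "transpose A ** Lam2 = (transpose L2 ** L2) ** transpose A"
    unfolding Lam2_def using transpose_mult_compression_eq full_row_rank invariant by blast
  then have intertwined: "M ** transpose A = transpose A ** N"
    unfolding M_def N_def
    by (simp add: matrix_add_rdistrib matrix_add_ldistrib matrix_scalar_ac
        scalar_matrix_assoc[symmetric] matrix_mul_assoc)
  have M_inv: "invertible M"
    unfolding M_def using invertible_regularized_normal_matrix lam_pos ker_int by blast
  note transpose_ker = transpose_ker_trivial_if_full_row_rank[OF full_row_rank]
  have "invertible N" "matrix_inv M ** transpose A = transpose A ** matrix_inv N"
    using invertible_if_intertwined matrix_inv_intertwined M_inv intertwined transpose_ker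
    by blast+
  with M_inv show ?thesis
    unfolding Let_def M_def N_def Lam2_def by (simp add: matrix_mul_assoc)
qed

end
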